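(* Let $H=\sum_{s=1}^{n}h_sH_s$ with $h_s\ge 0$, $\Gamma=\sum_s h_s>0$, and each $H_s$ a Hermitian $d\times d$ matrix with operator norm $\|H_s\|\le 1$. Let $\mathcal{L}=\sum_s h_s\mathcal{L}_s$ with $\mathcal{L}_s(\rho)=-i[H_s,\rho]$, so that $\Lambda(t)=\exp(t\mathcal{L})$ is the unitary channel $\rho\mapsto e^{-iHt}\rho e^{iHt}$. Let $t\ge 0$ and let $r$ be a positive integer with $r\Gamma$ a positive integer. Then $$\|\Lambda(t)-\mathcal{E}(t/r)^{r\Gamma}\|_\diamond\le \frac{4t^2\Gamma}{r},$$ and hence for any $\epsilon>0$, choosing $r\ge\left\lceil \frac{4t^{2}\Gamma}{\epsilon}\right\rceil$ (with $r\Gamma$ an integer) guarantees $\|\Lambda(t)-\mathcal{E}(t/r)^{r\Gamma}\|_\diamond\le\epsilon$.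
   Context: Work on $d\times d$ complex matrices. A superoperator is a linear map on $d\times d$ matrices; its diamond norm is $\|\Phi\|_\diamond=\sup\{\|(\Phi\otimes\mathrm{id}_d)(X)\|_1:\|X\|_1\le 1\}$, where $\|\cdot\|_1$ is the trace norm. With $p_s=h_s/\Gamma$, the qDRIFT channel is $\mathcal{E}(\tau)=\sum_{s=1}^{n}p_s\exp(\tau\mathcal{L}_s)$, i.e. $\mathcal{E}(\tau)(\rho)=\sum_s p_s e^{-iH_s\tau}\rho e^{iH_s\tau}$, for $\tau\ge0$. Powers of superoperators denote repeated composition. *)

theory Defs
  imports "HOL-Analysis.Analysis"
begin

text \<open>Complex d x d matrices are modelled as complex^'n^'n with d = CARD('n).
  Matrix product is ** (the product * on this type is entrywise, hence not used).\<close>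

type_synonym 'n cmat = "complex^'n^'n"

definition cadj :: "complex^'n^'n \<Rightarrow> complex^'n^'n" where
  "cadj A = (\<chi> i j. cnj (A $ j $ i))"

definition cscale :: "complex \<Rightarrow> complex^'n^'m \<Rightarrow> complex^'n^'m" where
  "cscale c A = (\<chi> i j. c * A $ i $ j)"

primrec mpow :: "complex^'n^'n \<Rightarrow> nat \<Rightarrow> complex^'n^'n" where
  "mpow A 0 = mat 1"
| "mpow A (Suc k) = A ** mpow A k"

definition mexp :: "complex^'n^'n \<Rightarrow> complex^'n^'n" where
  "mexp A = (\<Sum>k. (1 / fact k) *\<^sub>R mpow A k)"

definition hermitian :: "complex^'n^'n \<Rightarrow> bool" where
  "hermitian A \<longleftrightarrow> cadj A = A"

definition psd :: "complex^'n^'n \<Rightarrow> bool" where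
  "psd P \<longleftrightarrow> hermitian P \<and> (\<forall>x::complex^'n. 0 \<le> Re (\<Sum>i\<in>UNIV. cnj (x $ i) * (P *v x) $ i))"

definition trace_norm :: "complex^'n^'n \<Rightarrow> real" where
  "trace_norm X = Re (trace (THE P. psd P \<and> P ** P = cadj X ** X))"

definition op_norm :: "complex^'n^'n \<Rightarrow> real" where
  "op_norm A = onorm (\<lambda>x. A *v x)"

text \<open>Superoperators: maps on d x d matrices. Phi tensor id_d acts on (d*d) x (d*d) matrices,
  indexed by pairs (system index, ancilla index).\<close>
definition tensor_id ::
  "(complex^'n^'n \<Rightarrow> complex^'n^'n) \<Rightarrow> complex^('n\<times>'n)^('n\<times>'n) \<Rightarrow> complex^('n\<times>'n)^('n\<times>'n)" where
  "tensor_id \<Phi> X = (\<chi> p q. \<Phi> (\<chi> i j. X $ (i, snd p) $ (j, snd q)) $ fst p $ fst q)"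

definition diamond_norm :: "(complex^'n^'n \<Rightarrow> complex^'n^'n) \<Rightarrow> real" where
  "diamond_norm \<Phi> = Sup {trace_norm (tensor_id \<Phi> X) | X :: complex^('n\<times>'n)^('n\<times>'n). trace_norm X \<le> 1}"

definition unitary_evol :: "complex^'n^'n \<Rightarrow> real \<Rightarrow> complex^'n^'n \<Rightarrow> complex^'n^'n" where
  "unitary_evol H \<tau> \<rho> = mexp (cscale (- \<i> * of_real \<tau>) H) ** \<rho> ** mexp (cscale (\<i> * of_real \<tau>) H)"

definition qdrift :: "nat \<Rightarrow> (nat \<Rightarrow> real) \<Rightarrow> (nat \<Rightarrow> complex^'n^'n) \<Rightarrow> real
    \<Rightarrow> complex^'n^'n \<Rightarrow> complex^'n^'n" where
  "qdrift n h Hs \<tau> \<rho> = (\<Sum>s=1..n. (h s / (\<Sum>s'=1..n. h s')) *\<^sub>R unitary_evol (Hs s) \<tau> \<rho>)"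

end

(* Write G = H / \<Gamma> and \<tau> = t / r. Because N \<tau> = \<Gamma> t, the exact evolution is the N-fold power
   of the exact step \<rho> \<mapsto> exp(-i\<tau>G) \<rho> exp(i\<tau>G). This step and the qDRIFT step agree to first
   order in \<tau>: the first-order terms -i\<tau>[H_s, \<rho>] average to -i\<tau>[G, \<rho>], and each second-order
   remainder has diamond norm at most 2\<tau>^2, since ||exp(-i\<tau>H) - 1|| \<le> |\<tau>| and
   ||exp(-i\<tau>H) - 1 + i\<tau>H|| \<le> \<tau>^2/2 when ||H|| \<le> 1. Both steps are trace-norm contractions even
   after tensoring with the identity, so the N one-step errors add up to at most
   4\<tau>^2 N = 4 t^2 \<Gamma> / r.
   All trace-norm estimates come from the duality Re tr(U X) \<le> ||U|| ||X||_1, with equality for a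
   suitable partial isometry U; this rests on the spectral theorem for Hermitian matrices. *)

theory Submission
  imports Defs "HOL-Probability.Characteristic_Functions"
begin

definition diag_mat :: "complex^'n \<Rightarrow> complex^'n^'n" where
  "diag_mat z = (\<chi> i j. if i = j then z $ i else 0)"

definition unitary :: "complex^'n^'n \<Rightarrow> bool" where
  "unitary Q \<longleftrightarrow> cadj Q ** Q = mat 1 \<and> Q ** cadj Q = mat 1"

lemma unitary_cancel:
  assumes "unitary Q"
  shows "A ** cadj Q ** Q = A" "A ** Q ** cadj Q = A"
  using assms by (simp_all add: unitary_def flip: matrix_mul_assoc)

lemma cadj_nth [simp]: "cadj A $ i $ j = cnj (A $ j $ i)"
  by (simp add: cadj_def)

lemma cadj_cadj [simp]: "cadj (cadj A) = A"
  by (simp add: vec_eq_iff)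

lemma cadj_matrix_mult: "cadj (A ** B) = cadj B ** cadj A"
  by (simp add: vec_eq_iff matrix_matrix_mult_def mult.commute)

lemma cadj_scaleR: "cadj (c *\<^sub>R A) = c *\<^sub>R cadj A"
  by (simp add: vec_eq_iff)

lemma cadj_sum: "cadj (\<Sum>s\<in>S. f s) = (\<Sum>s\<in>S. cadj (f s))"
  by (induction S rule: infinite_finite_induct) (simp_all add: vec_eq_iff cadj_def)

lemma hermitian_sum_scaleR:
  "(\<And>s. s \<in> S \<Longrightarrow> hermitian (H s)) \<Longrightarrow> hermitian (\<Sum>s\<in>S. c s *\<^sub>R H s)"
  by (simp add: hermitian_def cadj_sum cadj_scaleR)

lemma cscale_nth [simp]: "cscale c A $ i $ j = c * A $ i $ j"
  by (simp add: cscale_def)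

lemma diag_mat_nth [simp]: "diag_mat z $ i $ j = (if i = j then z $ i else 0)"
  by (simp add: diag_mat_def)

lemma if_zero_mult: "(if P then a else 0) * (b::complex) = (if P then a * b else 0)"
  and mult_if_zero: "(b::complex) * (if P then a else 0) = (if P then b * a else 0)"
  by simp_all

lemma diag_mat_mult: "diag_mat a ** diag_mat b = diag_mat (\<chi> i. a $ i * b $ i)"
  by (simp add: vec_eq_iff matrix_matrix_mult_def if_zero_mult mult_if_zero)

lemma cadj_diag_mat: "cadj (diag_mat z) = diag_mat (\<chi> i. cnj (z $ i))"
  by (simp add: vec_eq_iff)

lemma diag_mat_1: "diag_mat (\<chi> i. 1) = mat 1"
  by (simp add: vec_eq_iff mat_def)

lemma matrix_mult_diag_mat_nth: "(A ** diag_mat z) $ i $ j = A $ i $ j * z $ j"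
  by (simp add: matrix_matrix_mult_def mult_if_zero)

lemma diag_mat_mult_vector_nth: "(diag_mat z *v y) $ i = z $ i * y $ i"
  by (simp add: matrix_vector_mult_def if_zero_mult)

lemma matrix_matrix_mult_column_nth: "(A ** B) $ i $ j = (A *v column j B) $ i"
  by (simp add: matrix_matrix_mult_def matrix_vector_mult_def column_def)

lemma matrix_add_rdistrib: "(A + B) ** C = A ** C + B ** C"
  by (simp add: vec_eq_iff matrix_matrix_mult_def sum.distrib algebra_simps)

lemma matrix_diff_rdistrib:
  fixes A :: "'a::ring_1^'n^'m"
  shows "(A - B) ** C = A ** C - B ** C"
  by (simp add: vec_eq_iff matrix_matrix_mult_def sum_subtractf algebra_simps)

lemma matrix_diff_ldistrib:
  fixes C :: "'a::ring_1^'n^'m"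
  shows "C ** (A - B) = C ** A - C ** B"
  by (simp add: vec_eq_iff matrix_matrix_mult_def sum_subtractf algebra_simps)

lemma sum_matrix_mult: "(\<Sum>s\<in>S. f s) ** B = (\<Sum>s\<in>S. f s ** B)"
  and matrix_mult_sum: "B ** (\<Sum>s\<in>S. f s) = (\<Sum>s\<in>S. B ** f s)"
  by (induction S rule: infinite_finite_induct)
    (simp_all add: matrix_add_rdistrib matrix_add_ldistrib)

lemma cscale_matrix_mult: "cscale c A ** B = cscale c (A ** B)"
  and matrix_mult_cscale: "A ** cscale c B = cscale c (A ** B)"
  and cscale_diff: "cscale c (A - B) = cscale c A - cscale c B"
  and cscale_scaleR: "cscale c (r *\<^sub>R A) = r *\<^sub>R cscale c A"
  by (simp_all add: vec_eq_iff matrix_matrix_mult_def sum_distrib_left scaleR_conv_of_real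
      algebra_simps)

lemma cscale_sum: "cscale c (\<Sum>s\<in>S. f s) = (\<Sum>s\<in>S. cscale c (f s))"
  by (induction S rule: infinite_finite_induct) (simp_all add: vec_eq_iff algebra_simps)

definition cinner :: "complex^'n \<Rightarrow> complex^'n \<Rightarrow> complex" where
  "cinner x y = (\<Sum>i\<in>UNIV. cnj (x $ i) * y $ i)"

lemma cinner_matrix_vector_mult: "cinner x (A *v y) = cinner (cadj A *v x) y"
proof -
  have "cinner x (A *v y) = (\<Sum>i\<in>UNIV. \<Sum>j\<in>UNIV. cnj (x $ i) * A $ i $ j * y $ j)"
    by (simp add: cinner_def matrix_vector_mult_def sum_distrib_left mult.assoc)
  also have "\<dots> = (\<Sum>j\<in>UNIV. \<Sum>i\<in>UNIV. cnj (x $ i) * A $ i $ j * y $ j)"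
    by (rule sum.swap)
  also have "\<dots> = (\<Sum>j\<in>UNIV. (\<Sum>i\<in>UNIV. cnj (x $ i) * A $ i $ j) * y $ j)"
    by (simp add: sum_distrib_right)
  also have "\<dots> = cinner (cadj A *v x) y"
    by (simp add: cinner_def matrix_vector_mult_def mult.commute)
  finally show ?thesis .
qed

lemma cinner_hermitian: "hermitian A \<Longrightarrow> cinner x (A *v y) = cinner (A *v x) y"
  by (simp add: cinner_matrix_vector_mult hermitian_def)

lemma cinner_self: "cinner x x = of_real ((norm x)\<^sup>2)"
proof -
  have "(norm x)\<^sup>2 = (\<Sum>i\<in>UNIV. (cmod (x $ i))\<^sup>2)"
    by (simp add: norm_vec_def L2_set_def sum_nonneg)
  then show ?thesis
    by (simp add: cinner_def complex_norm_square mult.commute del: of_real_power)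
qed

lemma cinner_self_eq_0 [simp]: "cinner x x = 0 \<longleftrightarrow> x = 0"
  by (simp add: cinner_self)

lemma Re_cinner: "Re (cinner x y) = inner x y"
  by (simp add: cinner_def inner_vec_def inner_complex_def)

lemma cnj_cinner: "cnj (cinner x y) = cinner y x"
  by (simp add: cinner_def mult.commute)

lemma cinner_scale_right: "cinner x (c *s y) = c * cinner x y"
  and cinner_scale_left: "cinner (c *s x) y = cnj c * cinner x y"
  by (simp_all add: cinner_def sum_distrib_left algebra_simps)

lemma cinner_scaleR_right: "cinner x (r *\<^sub>R y) = of_real r * cinner x y"
  and cinner_scaleR_left: "cinner (r *\<^sub>R x) y = of_real r * cinner x y"
  unfolding cinner_def vector_scaleR_component
  by (simp_all add: scaleR_conv_of_real sum_distrib_left algebra_simps)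

lemma cinner_add_right: "cinner x (y + z) = cinner x y + cinner x z"
  and cinner_add_left: "cinner (x + y) z = cinner x z + cinner y z"
  and cinner_diff_right: "cinner x (y - z) = cinner x y - cinner x z"
  by (simp_all add: cinner_def sum.distrib sum_subtractf algebra_simps)

lemma cinner_zero_right [simp]: "cinner x 0 = 0"
  by (simp add: cinner_def)

lemma cinner_sum_right: "cinner x (\<Sum>v\<in>S. f v) = (\<Sum>v\<in>S. cinner x (f v))"
  by (induction S rule: infinite_finite_induct) (simp_all add: cinner_add_right)

lemma norm_scale_vec: "norm (c *s (y::complex^'n)) = cmod c * norm y"
  by (simp add: norm_vec_def norm_mult L2_set_right_distrib)

lemma norm_cinner_le: "cmod (cinner x y) \<le> norm x * norm y"
proof (cases "cinner x y = 0")
  case False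
  define c where "c = cnj (cinner x y) / cmod (cinner x y)"
  have "cnj (cinner x y) * cinner x y = of_real ((cmod (cinner x y))\<^sup>2)"
    by (simp add: complex_norm_square[symmetric] mult.commute del: of_real_power)
  then have "cinner x (c *s y) = of_real (cmod (cinner x y))"
    using False by (simp add: cinner_scale_right c_def power2_eq_square)
  then have "cmod (cinner x y) = inner x (c *s y)"
    by (metis Re_complex_of_real Re_cinner)
  also have "\<dots> \<le> norm x * norm (c *s y)"
    by (rule Cauchy_Schwarz_ineq2[THEN abs_le_D1])
  also have "norm (c *s y) = norm y"
    using False by (simp add: norm_scale_vec c_def norm_divide)
  finally show ?thesis .
qed simp

lemma norm_add_scaleR_square:
  "(norm (x + c *\<^sub>R y))\<^sup>2 = (norm x)\<^sup>2 + 2 * c * Re (cinner x y) + c\<^sup>2 * (norm y)\<^sup>2"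
  unfolding power2_norm_eq_inner Re_cinner
  by (simp add: power2_eq_square algebra_simps inner_commute)

lemma norm_matrix_vector_mult_isometry: "cadj Q ** Q = mat 1 \<Longrightarrow> norm (Q *v y) = norm y"
  using cinner_matrix_vector_mult[of "Q *v y" Q y]
  by (simp add: cinner_self matrix_vector_mul_assoc del: of_real_power)

lemma matrix_vector_mult_scaleR_right: "A *v (c *\<^sub>R x) = c *\<^sub>R (A *v (x::complex^'n))"
  by (simp add: vec_eq_iff matrix_vector_mult_def scaleR_sum_right)

lemma matrix_vector_mult_scale_right: "A *v (c *s x) = c *s (A *v (x::complex^'n))"
  by (simp add: vec_eq_iff matrix_vector_mult_def sum_distrib_left algebra_simps)

lemma bounded_linear_matrix_vector_mult: "bounded_linear (\<lambda>x::complex^'n. A *v x)"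
proof -
  have "linear (\<lambda>x::complex^'n. A *v x)"
    by (intro linearI) (simp_all add: matrix_vector_right_distrib matrix_vector_mult_scaleR_right)
  then show ?thesis
    using linear_conv_bounded_linear by blast
qed

lemma op_norm_bound: "norm (A *v x) \<le> op_norm A * norm x"
  unfolding op_norm_def by (rule onorm[OF bounded_linear_matrix_vector_mult])

lemma op_norm_le: "(\<And>x. norm (A *v x) \<le> b * norm x) \<Longrightarrow> op_norm A \<le> b"
  unfolding op_norm_def by (rule onorm_le)

lemma op_norm_nonneg: "0 \<le> op_norm A"
  unfolding op_norm_def by (rule onorm_pos_le[OF bounded_linear_matrix_vector_mult])

lemma op_norm_mat_1: "op_norm (mat 1 :: complex^'n^'n) \<le> 1"
  by (rule op_norm_le) simp

lemma op_norm_matrix_mult: "op_norm (A ** B) \<le> op_norm A * op_norm B"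
proof (rule op_norm_le)
  fix x
  have "norm ((A ** B) *v x) \<le> op_norm A * norm (B *v x)"
    by (simp add: op_norm_bound flip: matrix_vector_mul_assoc)
  also have "\<dots> \<le> op_norm A * (op_norm B * norm x)"
    by (rule mult_left_mono[OF op_norm_bound op_norm_nonneg])
  finally show "norm ((A ** B) *v x) \<le> op_norm A * op_norm B * norm x"
    by (simp add: mult.assoc)
qed

lemma op_norm_add: "op_norm (A + B) \<le> op_norm A + op_norm B"
proof (rule op_norm_le)
  fix x
  have "norm ((A + B) *v x) \<le> norm (A *v x) + norm (B *v x)"
    by (simp add: matrix_vector_mult_add_rdistrib norm_triangle_ineq)
  also have "\<dots> \<le> op_norm A * norm x + op_norm B * norm x"
    by (intro add_mono op_norm_bound)
  finally show "norm ((A + B) *v x) \<le> (op_norm A + op_norm B) * norm x"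
    by (simp add: algebra_simps)
qed

lemma op_norm_scaleR: "op_norm (c *\<^sub>R A) = \<bar>c\<bar> * op_norm A"
proof -
  have "(\<lambda>x. (c *\<^sub>R A) *v x) = (\<lambda>x. c *\<^sub>R (A *v x))"
    by (simp add: fun_eq_iff vec_eq_iff matrix_vector_mult_def scaleR_sum_right)
  then show ?thesis
    unfolding op_norm_def by (simp add: onorm_scaleR[OF bounded_linear_matrix_vector_mult])
qed

lemma op_norm_sum: "op_norm (\<Sum>s\<in>S. f s :: complex^'n^'n) \<le> (\<Sum>s\<in>S. op_norm (f s))"
proof (induction S rule: infinite_finite_induct)
  case (insert x F)
  then show ?case
    using op_norm_add[of "f x" "sum f F"] by simp
qed (simp_all add: op_norm_def onorm_zero)

lemma op_norm_convex_combination_le_1: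
  assumes "\<And>s. s \<in> S \<Longrightarrow> p s \<ge> 0" "(\<Sum>s\<in>S. p s) = 1" "\<And>s. s \<in> S \<Longrightarrow> op_norm (A s) \<le> 1"
  shows "op_norm (\<Sum>s\<in>S. p s *\<^sub>R A s) \<le> 1"
proof -
  have "op_norm (\<Sum>s\<in>S. p s *\<^sub>R A s) \<le> (\<Sum>s\<in>S. p s * op_norm (A s))"
    using op_norm_sum[of "\<lambda>s. p s *\<^sub>R A s" S] assms(1) by (simp add: op_norm_scaleR)
  also have "\<dots> \<le> (\<Sum>s\<in>S. p s)"
    using assms(1,3) by (intro sum_mono) (simp add: mult_left_le)
  finally show ?thesis
    using assms(2) by simp
qed

section \<open>Spectral theorem for Hermitian matrices\<close>

definition orthonormal :: "(complex^'n) set \<Rightarrow> bool" where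
  "orthonormal S \<longleftrightarrow> (\<forall>v\<in>S. cinner v v = 1) \<and> (\<forall>v\<in>S. \<forall>w\<in>S. v \<noteq> w \<longrightarrow> cinner v w = 0)"

definition perp :: "(complex^'n) set \<Rightarrow> (complex^'n) set" where
  "perp S = {x. \<forall>v\<in>S. cinner v x = 0}"

lemma perp_add: "x \<in> perp S \<Longrightarrow> y \<in> perp S \<Longrightarrow> x + y \<in> perp S"
  and perp_diff: "x \<in> perp S \<Longrightarrow> y \<in> perp S \<Longrightarrow> x - y \<in> perp S"
  and perp_scaleR: "x \<in> perp S \<Longrightarrow> r *\<^sub>R x \<in> perp S"
  and perp_scale: "x \<in> perp S \<Longrightarrow> c *s x \<in> perp S"
  by (simp_all add: perp_def cinner_add_right cinner_diff_right cinner_scaleR_right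
      cinner_scale_right)

lemma closed_perp: "closed (perp S)"
proof -
  have "perp S = (\<Inter>v\<in>S. {x. cinner v x = 0})"
    by (auto simp: perp_def)
  moreover have "closed {x. cinner v x = 0}" for v :: "complex^'n"
    unfolding cinner_def by (intro closed_Collect_eq continuous_intros)
  ultimately show ?thesis
    by auto
qed

lemma perp_invariant:
  assumes "hermitian A" and "\<forall>v\<in>S. \<exists>\<mu>. A *v v = \<mu> *s v" and "x \<in> perp S"
  shows "A *v x \<in> perp S"
  unfolding perp_def
proof clarify
  fix v assume "v \<in> S"
  then obtain \<mu> where "A *v v = \<mu> *s v"
    using assms(2) by blast
  with assms(3) \<open>v \<in> S\<close> show "cinner v (A *v x) = 0"
    by (simp add: cinner_hermitian[OF assms(1)] cinner_scale_left perp_def)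
qed

(* Subtract from a vector outside the real span of S \<union> \<i>S, which has real dimension at most
   2 card S < 2 CARD('n), its components along S. *)
lemma perp_nonzero_exists:
  fixes S :: "(complex^'n) set"
  assumes fin: "finite S" and on: "orthonormal S" and card: "card S < CARD('n)"
  obtains y where "y \<noteq> 0" "y \<in> perp S"
proof -
  define T where "T = S \<union> (\<lambda>v. \<i> *s v) ` S"
  have "card T \<le> card S + card S"
    unfolding T_def using card_Un_le card_image_le[OF fin] by (meson add_left_mono order_trans)
  also have "\<dots> < DIM(complex^'n)"
    using card by simp
  finally have "\<not> UNIV \<subseteq> span T"
    using dim_le_card[of UNIV T] fin by (auto simp: T_def)
  then obtain x where x: "x \<notin> span T"
    by blast
  define s where "s = (\<Sum>v\<in>S. cinner v x *s v)"
  have "s \<in> span T"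
    unfolding s_def
  proof (rule span_sum)
    fix v assume "v \<in> S"
    then have "v \<in> span T" "\<i> *s v \<in> span T"
      by (auto simp: T_def intro: span_base)
    moreover have "cinner v x *s v = Re (cinner v x) *\<^sub>R v + Im (cinner v x) *\<^sub>R (\<i> *s v)"
      by (simp add: vec_eq_iff complex_eq_iff)
    ultimately show "cinner v x *s v \<in> span T"
      by (simp add: span_add span_scale)
  qed
  then have "x - s \<noteq> 0"
    using x by auto
  moreover have "x - s \<in> perp S"
    unfolding perp_def
  proof clarify
    fix w assume w: "w \<in> S"
    have "cinner w s = (\<Sum>v\<in>S. if v = w then cinner w x else 0)"
      unfolding s_def cinner_sum_right cinner_scale_right
      using on w by (intro sum.cong) (auto simp: orthonormal_def)
    then show "cinner w (x - s) = 0"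
      using w fin by (simp add: cinner_diff_right)
  qed
  ultimately show ?thesis
    using that by blast
qed

lemma linear_coeff_zero_if_quadratic_nonpos:
  fixes a b :: real
  assumes "\<And>e. a * e + b * e\<^sup>2 \<le> 0"
  shows "a = 0"
proof -
  define t where "t = 1 / (\<bar>b\<bar> + 1)"
  define k where "k = t * (1 + b * t)"
  have t: "t > 0" "\<bar>b\<bar> * t < 1"
    by (simp_all add: t_def)
  moreover have "- (\<bar>b\<bar> * t) \<le> b * t"
    using mult_right_mono[of "- \<bar>b\<bar>" b t] t(1) by simp
  ultimately have "k > 0"
    unfolding k_def by (intro mult_pos_pos) linarith+
  moreover have "a\<^sup>2 * k \<le> 0"
    using assms[of "a * t"] by (simp add: k_def power2_eq_square algebra_simps)
  ultimately have "a\<^sup>2 \<le> 0"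
    by (simp add: mult_le_0_iff)
  then show ?thesis
    by simp
qed

lemma quadratic_form_add_scaleR:
  assumes "hermitian A"
  shows "Re (cinner (x + c *\<^sub>R y) (A *v (x + c *\<^sub>R y))) =
    Re (cinner x (A *v x)) + 2 * c * Re (cinner y (A *v x)) + c\<^sup>2 * Re (cinner y (A *v y))"
proof -
  have "cinner x (A *v y) = cnj (cinner y (A *v x))"
    by (simp add: cinner_hermitian[OF assms] cnj_cinner)
  then show ?thesis
    by (simp add: matrix_vector_mult_scaleR_right cinner_add_left cinner_add_right
        cinner_scaleR_left cinner_scaleR_right power2_eq_square algebra_simps)
qed

lemma quadratic_form_attains_max_on_perp:
  assumes "y \<noteq> 0" "y \<in> perp S"
  obtains x0 where "x0 \<in> perp S" "norm x0 = 1"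
    "\<And>z. z \<in> perp S \<Longrightarrow> Re (cinner z (A *v z)) \<le> Re (cinner x0 (A *v x0)) * (norm z)\<^sup>2"
proof -
  define f where "f x = Re (cinner x (A *v x))" for x
  define K where "K = perp S \<inter> sphere 0 1"
  have "compact K"
    unfolding K_def by (rule closed_Int_compact[OF closed_perp compact_sphere])
  moreover have "(1 / norm y) *\<^sub>R y \<in> K"
    using assms by (simp add: K_def perp_scaleR)
  moreover have "continuous_on K f"
    unfolding f_def cinner_def matrix_vector_mult_def by (intro continuous_intros)
  ultimately obtain x0 where x0: "x0 \<in> K" and max: "\<And>z. z \<in> K \<Longrightarrow> f z \<le> f x0"
    using continuous_attains_sup[of K f] by blast
  have "f z \<le> f x0 * (norm z)\<^sup>2" if "z \<in> perp S" for z
  proof (cases "z = 0")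
    case False
    have "(1 / norm z) *\<^sub>R z \<in> K"
      using that False by (simp add: K_def perp_scaleR)
    moreover have "f ((1 / norm z) *\<^sub>R z) = f z / (norm z)\<^sup>2"
      by (simp add: f_def matrix_vector_mult_scaleR_right cinner_scaleR_left cinner_scaleR_right
          power2_eq_square)
    ultimately show ?thesis
      using max False by (fastforce simp: divide_le_eq)
  qed (simp add: f_def)
  with x0 that show ?thesis
    by (auto simp: K_def f_def)
qed

(* Optimality of x0 along y and \<i>y: the quadratic form has no first-order variation there. *)
lemma hermitian_maximizer_orthogonal:
  assumes herm: "hermitian A" and x0: "x0 \<in> perp S" "norm x0 = 1"
    and max: "\<And>z. z \<in> perp S \<Longrightarrow>
      Re (cinner z (A *v z)) \<le> Re (cinner x0 (A *v x0)) * (norm z)\<^sup>2"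
    and y: "y \<in> perp S" "cinner x0 y = 0"
  shows "cinner y (A *v x0) = 0"
proof -
  have Re0: "Re (cinner y (A *v x0)) = 0" if "y \<in> perp S" "cinner x0 y = 0" for y
  proof -
    have "2 * Re (cinner y (A *v x0)) = 0"
    proof (rule linear_coeff_zero_if_quadratic_nonpos)
      fix e :: real
      have "x0 + e *\<^sub>R y \<in> perp S"
        using x0 that by (simp add: perp_add perp_scaleR)
      then have "Re (cinner (x0 + e *\<^sub>R y) (A *v (x0 + e *\<^sub>R y)))
          \<le> Re (cinner x0 (A *v x0)) * (norm (x0 + e *\<^sub>R y))\<^sup>2"
        by (rule max)
      then show "2 * Re (cinner y (A *v x0)) * e +
          (Re (cinner y (A *v y)) - Re (cinner x0 (A *v x0)) * (norm y)\<^sup>2) * e\<^sup>2 \<le> 0"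
        unfolding quadratic_form_add_scaleR[OF herm] norm_add_scaleR_square
        using x0 that by (simp add: algebra_simps)
    qed
    then show ?thesis
      by simp
  qed
  have "Re (cinner (\<i> *s y) (A *v x0)) = 0"
    using y by (intro Re0) (simp_all add: perp_scale cinner_scale_right)
  with Re0[OF y] show ?thesis
    by (simp add: cinner_scale_left complex_eq_iff)
qed

lemma hermitian_maximizer_eigenvector:
  assumes herm: "hermitian A" and inv: "\<And>x. x \<in> perp S \<Longrightarrow> A *v x \<in> perp S"
    and x0: "x0 \<in> perp S" "norm x0 = 1"
    and max: "\<And>z. z \<in> perp S \<Longrightarrow>
      Re (cinner z (A *v z)) \<le> Re (cinner x0 (A *v x0)) * (norm z)\<^sup>2"
  shows "A *v x0 = of_real (Re (cinner x0 (A *v x0))) *s x0"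
proof -
  define c where "c = cinner x0 (A *v x0)"
  define z where "z = A *v x0 - c *s x0"
  have x0x0: "cinner x0 x0 = 1"
    using x0 by (simp add: cinner_self)
  have "z \<in> perp S"
    unfolding z_def using x0 by (intro perp_diff perp_scale inv)
  have zx0: "cinner x0 z = 0"
    by (simp add: z_def cinner_diff_right cinner_scale_right c_def x0x0)
  have "cinner z z = cinner z (A *v x0) - c * cinner z x0"
    by (subst (2) z_def) (simp add: cinner_diff_right cinner_scale_right)
  also have "cinner z x0 = 0"
    using zx0 cnj_cinner[of x0 z] by simp
  also have "cinner z (A *v x0) = 0"
    using hermitian_maximizer_orthogonal[OF herm x0 max \<open>z \<in> perp S\<close> zx0] .
  finally have "z = 0"
    by simp
  then have "A *v x0 = c *s x0"
    by (simp add: z_def)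
  moreover have "c = of_real (Re c)"
    using cinner_hermitian[OF herm, of x0 x0] cnj_cinner[of x0 "A *v x0"]
    by (simp add: c_def complex_eq_iff)
  ultimately show ?thesis
    by (simp add: c_def)
qed

lemma orthonormal_eigenvectors_exist:
  fixes A :: "complex^'n^'n"
  assumes herm: "hermitian A" and "k \<le> CARD('n)"
  shows "\<exists>S. finite S \<and> card S = k \<and> orthonormal S \<and> (\<forall>v\<in>S. \<exists>\<mu>::real. A *v v = of_real \<mu> *s v)"
  using assms(2)
proof (induction k)
  case 0
  show ?case
    by (rule exI[of _ "{}"]) (simp add: orthonormal_def)
next
  case (Suc k)
  then obtain S where S: "finite S" "card S = k" "orthonormal S"
    "\<forall>v\<in>S. \<exists>\<mu>::real. A *v v = of_real \<mu> *s v"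
    by auto
  obtain y where "y \<noteq> 0" "y \<in> perp S"
    using perp_nonzero_exists[OF S(1,3)] S(2) Suc.prems by auto
  then obtain x0 where x0: "x0 \<in> perp S" "norm x0 = 1"
    "\<And>z. z \<in> perp S \<Longrightarrow> Re (cinner z (A *v z)) \<le> Re (cinner x0 (A *v x0)) * (norm z)\<^sup>2"
    using quadratic_form_attains_max_on_perp[where A = A] by blast
  have inv: "A *v x \<in> perp S" if "x \<in> perp S" for x
    using S(4) that by (intro perp_invariant[OF herm]) blast+
  have ev: "A *v x0 = of_real (Re (cinner x0 (A *v x0))) *s x0"
    by (rule hermitian_maximizer_eigenvector[OF herm inv x0])
  have x0x0: "cinner x0 x0 = 1"
    using x0(2) by (simp add: cinner_self)
  have orth: "cinner v x0 = 0" "cinner x0 v = 0" if "v \<in> S" for v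
    using x0(1) that cnj_cinner[of v x0] by (simp_all add: perp_def)
  then have "x0 \<notin> S"
    using x0x0 by force
  moreover have "orthonormal (insert x0 S)"
    using S(3) x0x0 orth unfolding orthonormal_def by auto
  ultimately show ?case
    using S ev by (intro exI[of _ "insert x0 S"]) auto
qed

definition spectral_mat :: "complex^'n^'n \<Rightarrow> complex^'n \<Rightarrow> complex^'n^'n" where
  "spectral_mat Q z = Q ** diag_mat z ** cadj Q"

theorem hermitian_spectral_decomposition:
  fixes A :: "complex^'n^'n"
  assumes herm: "hermitian A"
  obtains Q \<mu> where "unitary Q" "A = spectral_mat Q (\<chi> j. of_real (\<mu> j))"
proof -
  obtain S where S: "finite S" "card S = CARD('n)" "orthonormal S"
    "\<forall>v\<in>S. \<exists>\<mu>::real. A *v v = of_real \<mu> *s v"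
    using orthonormal_eigenvectors_exist[OF herm, of "CARD('n)"] by auto
  obtain \<phi> where \<phi>: "bij_betw \<phi> (UNIV :: 'n set) S"
    using finite_same_card_bij[of "UNIV :: 'n set" S] S(1,2) by auto
  then have \<phi>S: "\<phi> j \<in> S" and \<phi>_inj: "\<phi> j = \<phi> k \<longleftrightarrow> j = k" for j k
    by (auto simp: bij_betw_def inj_on_def)
  define \<mu> where "\<mu> j = (SOME m::real. A *v \<phi> j = of_real m *s \<phi> j)" for j
  have \<mu>: "A *v \<phi> j = of_real (\<mu> j) *s \<phi> j" for j
    unfolding \<mu>_def by (rule someI_ex) (use S(4) \<phi>S in blast)
  define Q where "Q = (\<chi> i j. \<phi> j $ i)"
  have "(cadj Q ** Q) $ j $ k = cinner (\<phi> j) (\<phi> k)" for j k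
    by (simp add: matrix_matrix_mult_def Q_def cinner_def)
  moreover have "cinner (\<phi> j) (\<phi> k) = (if j = k then 1 else 0)" for j k
    using S(3) \<phi>S \<phi>_inj[of j k] by (auto simp: orthonormal_def)
  ultimately have "cadj Q ** Q = mat 1"
    by (simp add: vec_eq_iff mat_def)
  then have Q: "unitary Q"
    using matrix_left_right_inverse unitary_def by blast
  have "(A ** Q) $ i $ j = (A *v \<phi> j) $ i" for i j
    by (simp add: matrix_matrix_mult_def matrix_vector_mult_def Q_def)
  then have "A ** Q = Q ** diag_mat (\<chi> j. of_real (\<mu> j))"
    by (simp add: vec_eq_iff matrix_mult_diag_mat_nth \<mu> Q_def mult.commute)
  then have "A = spectral_mat Q (\<chi> j. of_real (\<mu> j))"
    by (metis spectral_mat_def unitary_cancel(2)[OF Q])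
  with Q that show ?thesis
    by blast
qed

lemma spectral_mat_nth: "spectral_mat Q z $ a $ b = (\<Sum>k\<in>UNIV. Q $ a $ k * z $ k * cnj (Q $ b $ k))"
  by (simp add: spectral_mat_def matrix_matrix_mult_def[of "Q ** diag_mat z"]
      matrix_mult_diag_mat_nth)

lemma spectral_mat_add: "spectral_mat Q (a + b) = spectral_mat Q a + spectral_mat Q b"
  and spectral_mat_diff: "spectral_mat Q (a - b) = spectral_mat Q a - spectral_mat Q b"
  and spectral_mat_scaleR: "spectral_mat Q (r *\<^sub>R a) = r *\<^sub>R spectral_mat Q a"
  and cscale_spectral_mat: "cscale c (spectral_mat Q a) = spectral_mat Q (\<chi> i. c * a $ i)"
  by (simp_all add: vec_eq_iff spectral_mat_nth algebra_simps sum.distrib sum_subtractf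
      scaleR_sum_right sum_distrib_left)

lemma cadj_spectral_mat: "cadj (spectral_mat Q z) = spectral_mat Q (\<chi> i. cnj (z $ i))"
  by (simp add: spectral_mat_def cadj_matrix_mult cadj_diag_mat matrix_mul_assoc)

lemma spectral_mat_1: "unitary Q \<Longrightarrow> spectral_mat Q (\<chi> i. 1) = mat 1"
  by (simp add: spectral_mat_def diag_mat_1 unitary_def)

lemma spectral_mat_mult:
  assumes "unitary Q"
  shows "spectral_mat Q a ** spectral_mat Q b = spectral_mat Q (\<chi> i. a $ i * b $ i)"
proof -
  have "spectral_mat Q a ** spectral_mat Q b = Q ** diag_mat a ** (cadj Q ** Q) ** diag_mat b ** cadj Q"
    by (simp add: spectral_mat_def matrix_mul_assoc)
  also have "\<dots> = Q ** (diag_mat a ** diag_mat b) ** cadj Q"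
    using assms by (simp add: unitary_def matrix_mul_assoc)
  finally show ?thesis
    by (simp add: spectral_mat_def diag_mat_mult)
qed

lemma spectral_mat_column:
  assumes "unitary Q"
  shows "spectral_mat Q z *v column j Q = z $ j *s column j Q"
proof -
  have "spectral_mat Q z ** Q = Q ** diag_mat z"
    using assms by (simp add: spectral_mat_def unitary_cancel)
  then have "(spectral_mat Q z ** Q) $ i $ j = Q $ i $ j * z $ j" for i
    by (simp add: matrix_mult_diag_mat_nth)
  then show ?thesis
    by (simp add: vec_eq_iff column_def matrix_matrix_mult_def matrix_vector_mult_def mult.commute)
qed

lemma norm_column_unitary:
  assumes "unitary Q"
  shows "norm (column j Q) = 1"
proof -
  have "cinner (column j Q) (column j Q) = (cadj Q ** Q) $ j $ j"
    by (simp add: cinner_def column_def matrix_matrix_mult_def)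
  then have "complex_of_real ((norm (column j Q))\<^sup>2) = 1"
    using assms by (simp add: unitary_def mat_def cinner_self del: of_real_power)
  then have "(norm (column j Q))\<^sup>2 = 1"
    by (simp only: of_real_eq_1_iff)
  then show ?thesis
    using norm_ge_zero[of "column j Q"] by (auto simp: power2_eq_1_iff)
qed

lemma norm_eigenvalue_spectral_mat_le:
  assumes "unitary Q"
  shows "cmod (z $ j) \<le> op_norm (spectral_mat Q z)"
  using op_norm_bound[of "spectral_mat Q z" "column j Q"]
  by (simp add: spectral_mat_column[OF assms] norm_column_unitary[OF assms] norm_scale_vec)

lemma op_norm_spectral_mat_le:
  assumes Q: "unitary Q" and z: "\<And>i. cmod (z $ i) \<le> B"
  shows "op_norm (spectral_mat Q z) \<le> B"
proof (rule op_norm_le)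
  fix x
  have isometry: "norm (Q *v y) = norm y" "norm (cadj Q *v y) = norm y" for y
    using Q by (simp_all add: norm_matrix_vector_mult_isometry unitary_def)
  have "norm (spectral_mat Q z *v x) = norm (diag_mat z *v (cadj Q *v x))"
    by (simp add: spectral_mat_def isometry flip: matrix_vector_mul_assoc matrix_mul_assoc)
  also have "\<dots> \<le> L2_set (\<lambda>i. B * cmod ((cadj Q *v x) $ i)) UNIV"
    unfolding norm_vec_def diag_mat_mult_vector_nth
    by (rule L2_set_mono) (simp_all add: norm_mult z mult_right_mono)
  also have "\<dots> = B * norm (cadj Q *v x)"
    using order_trans[OF norm_ge_zero z] by (simp add: L2_set_right_distrib norm_vec_def)
  also have "\<dots> = B * norm x"
    by (simp add: isometry)
  finally show "norm (spectral_mat Q z *v x) \<le> B * norm x" .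
qed

lemma hermitian_spectral_decomposition_bounded:
  assumes "hermitian H" "op_norm H \<le> 1"
  obtains Q \<mu> where "unitary Q" "H = spectral_mat Q (\<chi> j. of_real (\<mu> j))" "\<And>j. \<bar>\<mu> j\<bar> \<le> 1"
proof -
  obtain Q \<mu> where Q: "unitary Q" and H: "H = spectral_mat Q (\<chi> j. of_real (\<mu> j))"
    using hermitian_spectral_decomposition[OF assms(1)] by blast
  moreover have "\<bar>\<mu> j\<bar> \<le> 1" for j
    using norm_eigenvalue_spectral_mat_le[OF Q, of "\<chi> j. of_real (\<mu> j)" j] assms(2) H by simp
  ultimately show ?thesis
    using that by blast
qed

lemma mpow_Suc_right: "mpow A (Suc k) = mpow A k ** A"
  by (induction k) (simp_all add: matrix_mul_assoc)

lemma mpow_spectral_mat: "unitary Q \<Longrightarrow> mpow (spectral_mat Q z) k = spectral_mat Q (\<chi> i. z $ i ^ k)"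
  by (induction k) (simp_all add: spectral_mat_1 spectral_mat_mult)

lemma bounded_linear_spectral_mat: "bounded_linear (spectral_mat Q)"
  using linear_conv_bounded_linear
  by (metis linearI spectral_mat_add spectral_mat_scaleR)

lemma mexp_spectral_mat:
  assumes Q: "unitary Q"
  shows "mexp (spectral_mat Q z) = spectral_mat Q (\<chi> i. exp (z $ i))"
proof -
  have "(\<lambda>n. \<Sum>k<n. \<chi> i. z $ i ^ k /\<^sub>R fact k) = (\<lambda>n. \<chi> i. \<Sum>k<n. z $ i ^ k /\<^sub>R fact k)"
    by (simp add: fun_eq_iff vec_eq_iff)
  moreover have "(\<lambda>n. \<chi> i. \<Sum>k<n. z $ i ^ k /\<^sub>R fact k) \<longlonglongrightarrow> (\<chi> i. exp (z $ i))"
    by (intro tendsto_vec_lambda) (use exp_converges in \<open>simp add: sums_def\<close>)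
  ultimately have "(\<lambda>k. \<chi> i. z $ i ^ k /\<^sub>R fact k) sums (\<chi> i. exp (z $ i))"
    by (simp add: sums_def)
  then have "(\<lambda>k. spectral_mat Q (\<chi> i. z $ i ^ k /\<^sub>R fact k)) sums spectral_mat Q (\<chi> i. exp (z $ i))"
    by (rule bounded_linear.sums[OF bounded_linear_spectral_mat])
  moreover have "spectral_mat Q (\<chi> i. z $ i ^ k /\<^sub>R fact k) = (1 / fact k) *\<^sub>R mpow (spectral_mat Q z) k"
    for k
  proof -
    have "(\<chi> i. z $ i ^ k /\<^sub>R fact k) = (1 / fact k) *\<^sub>R (\<chi> i. z $ i ^ k)"
      by (simp add: vec_eq_iff inverse_eq_divide)
    then show ?thesis
      by (simp add: mpow_spectral_mat[OF Q] spectral_mat_scaleR)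
  qed
  ultimately show ?thesis
    unfolding mexp_def by (simp add: sums_iff)
qed

definition propagator :: "complex^'n^'n \<Rightarrow> real \<Rightarrow> complex^'n^'n" where
  "propagator H \<tau> = mexp (cscale (- \<i> * of_real \<tau>) H)"

lemma unitary_evol_eq_sandwich:
  "unitary_evol H \<tau> = (\<lambda>\<rho>. propagator H \<tau> ** \<rho> ** propagator H (- \<tau>))"
  by (simp add: fun_eq_iff unitary_evol_def propagator_def)

lemma propagator_spectral_mat:
  assumes "unitary Q"
  shows "propagator (spectral_mat Q (\<chi> j. of_real (\<mu> j))) \<tau> = spectral_mat Q (\<chi> j. iexp (- \<tau> * \<mu> j))"
  by (simp add: propagator_def cscale_spectral_mat mexp_spectral_mat[OF assms] algebra_simps)

lemma propagator_scaleR: "propagator (c *\<^sub>R H) \<tau> = propagator H (c * \<tau>)"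
proof -
  have "cscale (- \<i> * of_real \<tau>) (c *\<^sub>R H) = cscale (- \<i> * of_real (c * \<tau>)) H"
    by (simp add: vec_eq_iff scaleR_conv_of_real[where 'a = complex])
  then show ?thesis
    by (simp add: propagator_def)
qed

lemma mpow_propagator:
  assumes "hermitian H"
  shows "mpow (propagator H \<tau>) N = propagator H (real N * \<tau>)"
proof -
  obtain Q \<mu> where Q: "unitary Q" and H: "H = spectral_mat Q (\<chi> j. of_real (\<mu> j))"
    using hermitian_spectral_decomposition[OF assms] by blast
  have "iexp (- \<tau> * \<mu> j) ^ N = iexp (- (real N * \<tau>) * \<mu> j)" for j
    by (simp add: exp_of_nat_mult[symmetric] algebra_simps)
  then show ?thesis
    by (simp add: H propagator_spectral_mat[OF Q] mpow_spectral_mat[OF Q])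
qed

lemma op_norm_propagator_le_1:
  assumes "hermitian H"
  shows "op_norm (propagator H \<tau>) \<le> 1"
proof -
  obtain Q \<mu> where Q: "unitary Q" and H: "H = spectral_mat Q (\<chi> j. of_real (\<mu> j))"
    using hermitian_spectral_decomposition[OF assms] by blast
  show ?thesis
    unfolding H propagator_spectral_mat[OF Q] by (rule op_norm_spectral_mat_le[OF Q]) simp
qed

lemma op_norm_propagator_diff_1:
  assumes "hermitian H" "op_norm H \<le> 1"
  shows "op_norm (propagator H \<tau> - mat 1) \<le> \<bar>\<tau>\<bar>"
proof -
  obtain Q \<mu> where Q: "unitary Q" and H: "H = spectral_mat Q (\<chi> j. of_real (\<mu> j))"
    and \<mu>: "\<And>j. \<bar>\<mu> j\<bar> \<le> 1"
    using hermitian_spectral_decomposition_bounded[OF assms] by blast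
  have \<tau>\<mu>: "\<bar>\<tau> * \<mu> j\<bar> \<le> \<bar>\<tau>\<bar>" for j
    using \<mu>[of j] by (simp add: abs_mult mult_left_le)
  have "propagator H \<tau> - mat 1 = spectral_mat Q ((\<chi> j. iexp (- \<tau> * \<mu> j)) - (\<chi> j. 1))"
    by (simp add: H propagator_spectral_mat[OF Q] spectral_mat_diff spectral_mat_1[OF Q])
  also have "\<dots> = spectral_mat Q (\<chi> j. iexp (- \<tau> * \<mu> j) - 1)"
    by (rule arg_cong[where f = "spectral_mat Q"]) (simp add: vec_eq_iff)
  also have "op_norm \<dots> \<le> \<bar>\<tau>\<bar>"
  proof (rule op_norm_spectral_mat_le[OF Q])
    fix j
    show "cmod ((\<chi> j. iexp (- \<tau> * \<mu> j) - 1) $ j) \<le> \<bar>\<tau>\<bar>"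
      using iexp_approx1[of "- \<tau> * \<mu> j" 0] \<tau>\<mu>[of j] by simp
  qed
  finally show ?thesis .
qed

lemma op_norm_propagator_taylor_2:
  assumes "hermitian H" "op_norm H \<le> 1"
  shows "op_norm (propagator H \<tau> - mat 1 + cscale (\<i> * of_real \<tau>) H) \<le> \<tau>\<^sup>2 / 2"
proof -
  obtain Q \<mu> where Q: "unitary Q" and H: "H = spectral_mat Q (\<chi> j. of_real (\<mu> j))"
    and \<mu>: "\<And>j. \<bar>\<mu> j\<bar> \<le> 1"
    using hermitian_spectral_decomposition_bounded[OF assms] by blast
  have \<tau>\<mu>: "\<bar>\<tau> * \<mu> j\<bar> \<le> \<bar>\<tau>\<bar>" for j
    using \<mu>[of j] by (simp add: abs_mult mult_left_le)
  have "propagator H \<tau> - mat 1 + cscale (\<i> * of_real \<tau>) H = spectral_mat Q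
      ((\<chi> j. iexp (- \<tau> * \<mu> j)) - (\<chi> j. 1) + (\<chi> j. \<i> * of_real \<tau> * of_real (\<mu> j)))"
    unfolding H
    by (simp add: spectral_mat_add spectral_mat_diff spectral_mat_1[OF Q] cscale_spectral_mat
        propagator_spectral_mat[OF Q])
  also have "\<dots> = spectral_mat Q (\<chi> j. iexp (- \<tau> * \<mu> j) - 1 - \<i> * of_real (- \<tau> * \<mu> j))"
    by (rule arg_cong[where f = "spectral_mat Q"]) (simp add: vec_eq_iff)
  also have "op_norm \<dots> \<le> \<tau>\<^sup>2 / 2"
  proof (rule op_norm_spectral_mat_le[OF Q])
    fix j
    have "cmod ((\<chi> j. iexp (- \<tau> * \<mu> j) - 1 - \<i> * of_real (- \<tau> * \<mu> j)) $ j)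
        = cmod (iexp (- \<tau> * \<mu> j) - (\<Sum>k\<le>1. (\<i> * of_real (- \<tau> * \<mu> j)) ^ k / fact k))"
      by (simp add: algebra_simps)
    also have "\<dots> \<le> (\<tau> * \<mu> j)\<^sup>2 / 2"
      using iexp_approx1[of "- \<tau> * \<mu> j" 1] by (simp add: power2_eq_square)
    also have "\<dots> \<le> \<tau>\<^sup>2 / 2"
      using \<tau>\<mu>[of j] by (simp add: abs_le_square_iff)
    finally show "cmod ((\<chi> j. iexp (- \<tau> * \<mu> j) - 1 - \<i> * of_real (- \<tau> * \<mu> j)) $ j) \<le> \<tau>\<^sup>2 / 2" .
  qed
  finally show ?thesis .
qed

section \<open>The trace norm\<close>

lemma cinner_cadj_mult_self: "cinner x ((cadj X ** X) *v x) = of_real ((norm (X *v x))\<^sup>2)"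
  using cinner_matrix_vector_mult[of x "cadj X" "X *v x"]
  by (simp add: cinner_self matrix_vector_mul_assoc)

lemma psd_iff: "psd P \<longleftrightarrow> hermitian P \<and> (\<forall>x. 0 \<le> Re (cinner x (P *v x)))"
  by (simp add: psd_def cinner_def)

lemma psd_spectral_mat:
  assumes "\<And>j. \<mu> j \<ge> 0"
  shows "psd (spectral_mat Q (\<chi> j. of_real (\<mu> j)))"
  unfolding psd_iff
proof (intro conjI allI)
  show "hermitian (spectral_mat Q (\<chi> j. of_real (\<mu> j)))"
    by (simp add: hermitian_def cadj_spectral_mat)
  fix x
  define y where "y = cadj Q *v x"
  have "cinner x (spectral_mat Q (\<chi> j. of_real (\<mu> j)) *v x)
      = cinner y (diag_mat (\<chi> j. of_real (\<mu> j)) *v y)"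
    by (simp add: spectral_mat_def y_def cinner_matrix_vector_mult flip: matrix_vector_mul_assoc)
  also have "\<dots> = (\<Sum>i\<in>UNIV. of_real (\<mu> i * (cmod (y $ i))\<^sup>2))"
    by (simp add: cinner_def diag_mat_mult_vector_nth complex_norm_square algebra_simps
        del: of_real_power)
  finally show "0 \<le> Re (cinner x (spectral_mat Q (\<chi> j. of_real (\<mu> j)) *v x))"
    using assms by (simp add: sum_nonneg)
qed

lemma psd_sqrt_eigenvector:
  assumes psd: "psd P" and PP: "P ** P = M" and ev: "M *v v = of_real \<mu> *s v" and \<mu>: "\<mu> \<ge> 0"
  shows "P *v v = of_real (sqrt \<mu>) *s v"
proof -
  have herm: "hermitian P" and pos: "\<And>x. 0 \<le> Re (cinner x (P *v x))"
    using psd by (auto simp: psd_iff)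
  show ?thesis
  proof (cases "\<mu> = 0")
    case True
    have "cinner (P *v v) (P *v v) = cinner v (M *v v)"
      by (simp add: cinner_hermitian[OF herm, symmetric] matrix_vector_mul_assoc PP)
    then show ?thesis
      using ev True by simp
  next
    case False
    define s where "s = sqrt \<mu>"
    have s: "s > 0"
      using False \<mu> by (simp add: s_def)
    define w where "w = P *v v - of_real s *s v"
    have "P *v w + of_real s *s w = M *v v - (of_real s * of_real s) *s v"
      by (simp add: w_def matrix_vector_mult_scale_right matrix_vector_mul_assoc PP
          scalar_mult_eq_scaleR algebra_simps)
    also have "\<dots> = 0"
      using ev \<mu> by (simp add: s_def flip: of_real_mult)
    finally have "0 = Re (cinner w (P *v w + of_real s *s w))"
      by simp
    also have "\<dots> = Re (cinner w (P *v w)) + s * (norm w)\<^sup>2"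
      by (simp add: cinner_add_right cinner_scale_right cinner_self)
    finally have "s * (norm w)\<^sup>2 \<le> 0"
      using pos[of w] by linarith
    then have "w = 0"
      using s by (simp add: mult_le_0_iff)
    then show ?thesis
      by (simp add: w_def s_def)
  qed
qed

lemma trace_spectral_mat: "unitary Q \<Longrightarrow> trace (spectral_mat Q z) = (\<Sum>i\<in>UNIV. z $ i)"
  unfolding spectral_mat_def
  by (subst trace_mul_sym) (simp add: matrix_mul_assoc unitary_def trace_def)

lemma cadj_mult_self_decomposition:
  obtains Q \<mu> where "unitary Q" "\<And>j. \<mu> j \<ge> 0" "cadj X ** X = spectral_mat Q (\<chi> j. of_real (\<mu> j))"
proof -
  have "hermitian (cadj X ** X)"
    by (simp add: hermitian_def cadj_matrix_mult)
  then obtain Q \<mu> where Q: "unitary Q" and M: "cadj X ** X = spectral_mat Q (\<chi> j. of_real (\<mu> j))"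
    by (rule hermitian_spectral_decomposition)
  have "complex_of_real (\<mu> j) = of_real ((norm (X *v column j Q))\<^sup>2)" for j
    using cinner_cadj_mult_self[of "column j Q" X]
    by (simp add: M spectral_mat_column[OF Q] cinner_scale_right cinner_self norm_column_unitary[OF Q])
  then have "\<mu> j \<ge> 0" for j
    by (metis of_real_eq_iff zero_le_power2)
  with Q M that show ?thesis
    by blast
qed

lemma the_psd_sqrt_spectral_mat:
  assumes Q: "unitary Q" and \<mu>: "\<And>j. \<mu> j \<ge> 0"
  shows "(THE P. psd P \<and> P ** P = spectral_mat Q (\<chi> j. of_real (\<mu> j)))
    = spectral_mat Q (\<chi> j. of_real (sqrt (\<mu> j)))"
proof (rule the_equality)
  show "psd (spectral_mat Q (\<chi> j. of_real (sqrt (\<mu> j)))) \<and>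
    spectral_mat Q (\<chi> j. of_real (sqrt (\<mu> j))) ** spectral_mat Q (\<chi> j. of_real (sqrt (\<mu> j)))
      = spectral_mat Q (\<chi> j. of_real (\<mu> j))"
    using \<mu> by (simp add: psd_spectral_mat spectral_mat_mult[OF Q] flip: of_real_mult)
  fix P assume P: "psd P \<and> P ** P = spectral_mat Q (\<chi> j. of_real (\<mu> j))"
  have "spectral_mat Q (\<chi> j. of_real (\<mu> j)) *v column j Q = of_real (\<mu> j) *s column j Q" for j
    by (simp add: spectral_mat_column[OF Q])
  then have "P *v column j Q = of_real (sqrt (\<mu> j)) *s column j Q" for j
    using psd_sqrt_eigenvector[OF conjunct1[OF P] conjunct2[OF P]] \<mu> by blast
  then have "P ** Q = Q ** diag_mat (\<chi> j. of_real (sqrt (\<mu> j)))"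
    by (simp add: vec_eq_iff matrix_mult_diag_mat_nth matrix_matrix_mult_column_nth[of P] column_def
        mult.commute)
  then show "P = spectral_mat Q (\<chi> j. of_real (sqrt (\<mu> j)))"
    by (metis spectral_mat_def unitary_cancel(2)[OF Q])
qed

lemma trace_norm_decomposition:
  obtains Q \<mu> where "unitary Q" "\<And>j. \<mu> j \<ge> 0"
    "cadj X ** X = spectral_mat Q (\<chi> j. of_real (\<mu> j))" "trace_norm X = (\<Sum>j\<in>UNIV. sqrt (\<mu> j))"
proof -
  obtain Q \<mu> where Q: "unitary Q" and \<mu>: "\<And>j. \<mu> j \<ge> 0"
    and M: "cadj X ** X = spectral_mat Q (\<chi> j. of_real (\<mu> j))"
    using cadj_mult_self_decomposition[of X] by blast
  moreover have "trace_norm X = (\<Sum>j\<in>UNIV. sqrt (\<mu> j))"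
    by (simp add: trace_norm_def M the_psd_sqrt_spectral_mat[OF Q \<mu>] trace_spectral_mat[OF Q])
  ultimately show ?thesis
    using that by blast
qed

lemma trace_norm_nonneg: "0 \<le> trace_norm X"
  by (metis trace_norm_decomposition real_sqrt_ge_zero sum_nonneg)

lemma trace_eq_sum_cinner_column:
  assumes "unitary Q"
  shows "trace B = (\<Sum>j\<in>UNIV. cinner (column j Q) (B *v column j Q))"
proof -
  have "trace B = trace (cadj Q ** (B ** Q))"
    using trace_mul_sym[of "B ** Q" "cadj Q"] assms by (simp add: unitary_cancel)
  then show ?thesis
    by (simp add: trace_def matrix_matrix_mult_def cinner_def column_def matrix_vector_mult_def)
qed

lemma Re_trace_mult_le: "Re (trace (U ** X)) \<le> op_norm U * trace_norm X"
proof -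
  obtain Q \<mu> where Q: "unitary Q" and M: "cadj X ** X = spectral_mat Q (\<chi> j. of_real (\<mu> j))"
    and tn: "trace_norm X = (\<Sum>j\<in>UNIV. sqrt (\<mu> j))"
    by (rule trace_norm_decomposition)
  have norm_X_column: "norm (X *v column j Q) = sqrt (\<mu> j)" for j
    using cinner_cadj_mult_self[of "column j Q" X]
    by (simp add: M spectral_mat_column[OF Q] cinner_scale_right cinner_self norm_column_unitary[OF Q]
        real_sqrt_unique del: of_real_power)
  have "Re (cinner (column j Q) ((U ** X) *v column j Q)) \<le> op_norm U * sqrt (\<mu> j)" for j
  proof -
    have "Re (cinner (column j Q) ((U ** X) *v column j Q))
        \<le> norm (column j Q) * norm ((U ** X) *v column j Q)"
      using complex_Re_le_cmod order_trans norm_cinner_le by blast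
    also have "\<dots> = norm (U *v (X *v column j Q))"
      by (simp add: norm_column_unitary[OF Q] matrix_vector_mul_assoc)
    also have "\<dots> \<le> op_norm U * sqrt (\<mu> j)"
      using op_norm_bound[of U "X *v column j Q"] by (simp add: norm_X_column)
    finally show ?thesis .
  qed
  then show ?thesis
    by (simp add: trace_eq_sum_cinner_column[OF Q] tn sum_distrib_left sum_mono)
qed

lemma op_norm_le_1_if_cadj_mult_idempotent:
  assumes "(cadj U ** U) ** (cadj U ** U) = cadj U ** U"
  shows "op_norm U \<le> 1"
proof (rule op_norm_le)
  fix x
  define P where "P = cadj U ** U"
  have herm: "hermitian P"
    by (simp add: P_def hermitian_def cadj_matrix_mult)
  have PP: "P ** P = P"
    using assms by (simp add: P_def)
  have "cinner (P *v x) (x - P *v x) = 0"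
    by (simp add: cinner_hermitian[OF herm, symmetric] matrix_vector_mult_diff_distrib
        matrix_vector_mul_assoc PP)
  then have "(norm x)\<^sup>2 = (norm (P *v x))\<^sup>2 + (norm (x - P *v x))\<^sup>2"
    using norm_add_scaleR_square[of "P *v x" 1 "x - P *v x"] by simp
  moreover have "(norm (U *v x))\<^sup>2 = (norm (P *v x))\<^sup>2"
  proof -
    have "complex_of_real ((norm (U *v x))\<^sup>2) = cinner x (P *v x)"
      by (simp add: P_def cinner_cadj_mult_self)
    also have "\<dots> = cinner x (P *v (P *v x))"
      by (simp add: matrix_vector_mul_assoc PP)
    also have "\<dots> = cinner (P *v x) (P *v x)"
      by (rule cinner_hermitian[OF herm])
    also have "\<dots> = complex_of_real ((norm (P *v x))\<^sup>2)"
      by (rule cinner_self)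
    finally show ?thesis
      by (simp only: of_real_eq_iff)
  qed
  ultimately have "(norm (U *v x))\<^sup>2 \<le> (norm x)\<^sup>2"
    using zero_le_power2[of "norm (x - P *v x)"] by linarith
  then show "norm (U *v x) \<le> 1 * norm x"
    using power2_le_imp_le norm_ge_zero by simp
qed

(* U = |X|^+ X^*, with |X|^+ the pseudo-inverse of |X| = (X^* X)^(1/2), satisfies U X = |X|. *)
lemma trace_norm_attained: "\<exists>U. op_norm U \<le> 1 \<and> Re (trace (U ** X)) = trace_norm X"
proof -
  obtain Q \<mu> where Q: "unitary Q" and \<mu>: "\<And>j. \<mu> j \<ge> 0"
    and M: "cadj X ** X = spectral_mat Q (\<chi> j. of_real (\<mu> j))"
    and tn: "trace_norm X = (\<Sum>j\<in>UNIV. sqrt (\<mu> j))"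
    using trace_norm_decomposition[of X] by blast
  define d where "d j = (if \<mu> j > 0 then 1 / sqrt (\<mu> j) else 0)" for j
  define D where "D = spectral_mat Q (\<chi> j. of_real (d j))"
  define U where "U = D ** cadj X"
  have d\<mu>: "d j * \<mu> j = sqrt (\<mu> j)" "d j * d j * \<mu> j * d j * d j = d j * d j" for j
    using \<mu>[of j] by (auto simp: d_def real_div_sqrt field_simps)
  have "U ** X = spectral_mat Q (\<chi> j. of_real (d j * \<mu> j))"
    by (simp add: U_def D_def M spectral_mat_mult[OF Q] flip: matrix_mul_assoc of_real_mult)
  then have "U ** X = spectral_mat Q (\<chi> j. of_real (sqrt (\<mu> j)))"
    by (simp only: d\<mu>(1))
  then have "Re (trace (U ** X)) = trace_norm X"
    by (simp add: trace_spectral_mat[OF Q] tn)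
  moreover have "(cadj U ** U) ** (cadj U ** U) = cadj U ** U"
  proof -
    have DD: "cadj D = D"
      by (simp add: D_def cadj_spectral_mat)
    have "(cadj U ** U) ** (cadj U ** U) = X ** (D ** D ** (cadj X ** X) ** D ** D) ** cadj X"
      unfolding U_def cadj_matrix_mult cadj_cadj DD by (simp only: matrix_mul_assoc)
    also have "D ** D ** (cadj X ** X) ** D ** D
        = spectral_mat Q (\<chi> j. of_real (d j * d j * \<mu> j * d j * d j))"
      by (simp add: D_def M spectral_mat_mult[OF Q] flip: of_real_mult)
    also have "\<dots> = D ** D"
      by (simp only: d\<mu>(2)) (simp add: D_def spectral_mat_mult[OF Q] flip: of_real_mult)
    finally show ?thesis
      unfolding U_def cadj_matrix_mult cadj_cadj DD by (simp only: matrix_mul_assoc)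
  qed
  then have "op_norm U \<le> 1"
    by (rule op_norm_le_1_if_cadj_mult_idempotent)
  ultimately show ?thesis
    by blast
qed

lemma trace_norm_triangle: "trace_norm (Y + Z) \<le> trace_norm Y + trace_norm Z"
proof -
  obtain U where U: "op_norm U \<le> 1" "Re (trace (U ** (Y + Z))) = trace_norm (Y + Z)"
    using trace_norm_attained by blast
  have "Re (trace (U ** (Y + Z))) = Re (trace (U ** Y)) + Re (trace (U ** Z))"
    by (simp add: matrix_add_ldistrib trace_add)
  also have "\<dots> \<le> op_norm U * trace_norm Y + op_norm U * trace_norm Z"
    by (intro add_mono Re_trace_mult_le)
  also have "\<dots> \<le> trace_norm Y + trace_norm Z"
    using U(1) trace_norm_nonneg by (intro add_mono mult_left_le_one_le op_norm_nonneg)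
  finally show ?thesis
    using U(2) by simp
qed

lemma trace_norm_scaleR: "trace_norm (c *\<^sub>R Y) \<le> \<bar>c\<bar> * trace_norm Y"
proof -
  obtain U where U: "op_norm U \<le> 1" "Re (trace (U ** (c *\<^sub>R Y))) = trace_norm (c *\<^sub>R Y)"
    using trace_norm_attained by blast
  have "Re (trace (U ** (c *\<^sub>R Y))) \<le> op_norm (c *\<^sub>R U) * trace_norm Y"
    by (simp add: matrix_scalar_ac Re_trace_mult_le)
  also have "\<dots> = \<bar>c\<bar> * (op_norm U * trace_norm Y)"
    by (simp add: op_norm_scaleR)
  also have "\<dots> \<le> \<bar>c\<bar> * trace_norm Y"
    using U(1) by (intro mult_left_mono mult_left_le_one_le op_norm_nonneg trace_norm_nonneg) auto
  finally show ?thesis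
    using U(2) by simp
qed

lemma trace_norm_zero [simp]: "trace_norm (0 :: complex^'n^'n) = 0"
  using trace_norm_scaleR[of 0 "0 :: complex^'n^'n"] trace_norm_nonneg[of "0 :: complex^'n^'n"] by simp

lemma trace_norm_diff: "trace_norm (Y - Z) \<le> trace_norm Y + trace_norm Z"
  using trace_norm_triangle[of Y "(- 1) *\<^sub>R Z"] trace_norm_scaleR[of "- 1" Z] by simp

lemma trace_norm_sum: "trace_norm (\<Sum>s\<in>S. f s) \<le> (\<Sum>s\<in>S. trace_norm (f s))"
  by (induction S rule: infinite_finite_induct)
    (simp_all add: order_trans[OF trace_norm_triangle])

lemma trace_norm_matrix_mult_le: "trace_norm (A ** Y ** B) \<le> op_norm A * op_norm B * trace_norm Y"
proof -
  obtain U where U: "op_norm U \<le> 1" "Re (trace (U ** (A ** Y ** B))) = trace_norm (A ** Y ** B)"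
    using trace_norm_attained by blast
  have "trace (U ** (A ** Y ** B)) = trace ((B ** U ** A) ** Y)"
    using trace_mul_sym[of "U ** A ** Y" B] by (simp add: matrix_mul_assoc)
  then have "trace_norm (A ** Y ** B) \<le> op_norm (B ** U ** A) * trace_norm Y"
    using U(2) Re_trace_mult_le[of "B ** U ** A" Y] by simp
  also have "\<dots> \<le> op_norm B * op_norm U * op_norm A * trace_norm Y"
    by (intro mult_right_mono trace_norm_nonneg order_trans[OF op_norm_matrix_mult]
        mult_right_mono op_norm_matrix_mult op_norm_nonneg)
  also have "\<dots> = op_norm U * (op_norm A * op_norm B * trace_norm Y)"
    by (simp add: ac_simps)
  also have "\<dots> \<le> op_norm A * op_norm B * trace_norm Y"
    using U(1) by (intro mult_left_le_one_le op_norm_nonneg mult_nonneg_nonneg trace_norm_nonneg)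
  finally show ?thesis .
qed

section \<open>Extension by the identity on an ancilla\<close>

(* A \<otimes> 1, with pairs indexed as in tensor_id: the first component is the system index. *)
definition tensor_id_mat :: "complex^'n^'n \<Rightarrow> complex^('n\<times>'n)^('n\<times>'n)" where
  "tensor_id_mat A = (\<chi> p q. if snd p = snd q then A $ fst p $ fst q else 0)"

lemma sum_prod_UNIV: "(\<Sum>p\<in>UNIV. f p) = (\<Sum>a\<in>UNIV. \<Sum>b\<in>UNIV. f (a, b))"
  by (simp add: sum.cartesian_product)

lemma tensor_id_sandwich: "tensor_id (\<lambda>\<rho>. A ** \<rho> ** B) X = tensor_id_mat A ** X ** tensor_id_mat B"
  by (simp add: vec_eq_iff tensor_id_def tensor_id_mat_def matrix_matrix_mult_def sum_prod_UNIV
      if_zero_mult mult_if_zero sum_distrib_left sum_distrib_right)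

lemma tensor_id_mat_mult_vector_nth:
  "(tensor_id_mat A *v x) $ (i, b) = (A *v (\<chi> k. x $ (k, b))) $ i"
  by (simp add: matrix_vector_mult_def tensor_id_mat_def sum_prod_UNIV if_zero_mult)

lemma op_norm_tensor_id_mat:
  fixes A :: "complex^'n^'n"
  shows "op_norm (tensor_id_mat A) \<le> op_norm A"
proof (rule op_norm_le)
  fix x :: "complex^('n\<times>'n)"
  define x\<^sub>b where "x\<^sub>b b = (\<chi> k. x $ (k, b))" for b
  have norm2: "(norm y)\<^sup>2 = (\<Sum>p\<in>UNIV. (cmod (y $ p))\<^sup>2)" for y :: "complex^'m"
    by (simp add: norm_vec_def L2_set_def sum_nonneg)
  have sum_blocks: "(norm y)\<^sup>2 = (\<Sum>b\<in>UNIV. \<Sum>a\<in>UNIV. (cmod (y $ (a, b)))\<^sup>2)"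
    for y :: "complex^('n\<times>'n)"
    unfolding norm2 sum_prod_UNIV by (rule sum.swap)
  have "(norm (tensor_id_mat A *v x))\<^sup>2 = (\<Sum>b\<in>UNIV. (norm (A *v x\<^sub>b b))\<^sup>2)"
    by (simp add: sum_blocks norm2 tensor_id_mat_mult_vector_nth x\<^sub>b_def)
  also have "\<dots> \<le> (\<Sum>b\<in>UNIV. (op_norm A * norm (x\<^sub>b b))\<^sup>2)"
    by (intro sum_mono power_mono op_norm_bound) simp
  also have "\<dots> = (op_norm A)\<^sup>2 * (\<Sum>b\<in>UNIV. (norm (x\<^sub>b b))\<^sup>2)"
    by (simp add: power_mult_distrib sum_distrib_left)
  also have "(\<Sum>b\<in>UNIV. (norm (x\<^sub>b b))\<^sup>2) = (norm x)\<^sup>2"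
    unfolding sum_blocks[of x] x\<^sub>b_def by (intro sum.cong refl) (simp only: norm2 vec_lambda_beta)
  finally have "(norm (tensor_id_mat A *v x))\<^sup>2 \<le> (op_norm A * norm x)\<^sup>2"
    by (simp add: power_mult_distrib)
  then show "norm (tensor_id_mat A *v x) \<le> op_norm A * norm x"
    by (rule power2_le_imp_le) (simp add: op_norm_nonneg)
qed

lemma trace_norm_tensor_id_sandwich_le:
  "trace_norm (tensor_id (\<lambda>\<rho>. A ** \<rho> ** B) X) \<le> op_norm A * op_norm B * trace_norm X"
proof -
  have "trace_norm (tensor_id (\<lambda>\<rho>. A ** \<rho> ** B) X)
      \<le> op_norm (tensor_id_mat A) * op_norm (tensor_id_mat B) * trace_norm X"
    unfolding tensor_id_sandwich by (rule trace_norm_matrix_mult_le)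
  also have "\<dots> \<le> op_norm A * op_norm B * trace_norm X"
    by (intro mult_right_mono mult_mono op_norm_tensor_id_mat op_norm_nonneg trace_norm_nonneg)
  finally show ?thesis .
qed

lemma tensor_id_add: "tensor_id (\<lambda>\<rho>. f \<rho> + g \<rho>) X = tensor_id f X + tensor_id g X"
  and tensor_id_diff: "tensor_id (\<lambda>\<rho>. f \<rho> - g \<rho>) X = tensor_id f X - tensor_id g X"
  and tensor_id_scaleR: "tensor_id (\<lambda>\<rho>. c *\<^sub>R f \<rho>) X = c *\<^sub>R tensor_id f X"
  and tensor_id_sum: "tensor_id (\<lambda>\<rho>. \<Sum>s\<in>S. F s \<rho>) X = (\<Sum>s\<in>S. tensor_id (F s) X)"
  and tensor_id_comp: "tensor_id (\<lambda>\<rho>. f (g \<rho>)) X = tensor_id f (tensor_id g X)"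
  by (simp_all add: tensor_id_def vec_eq_iff)

lemma tensor_id_funpow: "tensor_id (f ^^ N) X = (tensor_id f ^^ N) X"
proof (induction N arbitrary: X)
  case (Suc N)
  then show ?case
    using tensor_id_comp[of f "f ^^ N"] by simp
qed (simp add: tensor_id_def vec_eq_iff)

lemma tensor_id_diff_right:
  assumes "\<And>a b. f (a - b) = f a - f b"
  shows "tensor_id f (X - Y) = tensor_id f X - tensor_id f Y"
proof -
  have "(\<chi> i j. X $ (i, b) $ (j, c) - Y $ (i, b) $ (j, c))
      = (\<chi> i j. X $ (i, b) $ (j, c)) - (\<chi> i j. Y $ (i, b) $ (j, c))" for b c
    by (simp add: vec_eq_iff)
  then have "f (\<chi> i j. X $ (i, b) $ (j, c) - Y $ (i, b) $ (j, c))
      = f (\<chi> i j. X $ (i, b) $ (j, c)) - f (\<chi> i j. Y $ (i, b) $ (j, c))" for b c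
    by (simp add: assms)
  then show ?thesis
    by (simp add: tensor_id_def vec_eq_iff)
qed

section \<open>Superoperator estimates\<close>

lemma unitary_evol_scaleR: "unitary_evol (c *\<^sub>R H) \<tau> = unitary_evol H (c * \<tau>)"
  by (simp add: unitary_evol_eq_sandwich propagator_scaleR)

lemma sandwich_funpow: "((\<lambda>\<rho>. A ** \<rho> ** B) ^^ N) \<rho> = mpow A N ** \<rho> ** mpow B N"
proof (induction N)
  case (Suc N)
  have "((\<lambda>\<rho>. A ** \<rho> ** B) ^^ Suc N) \<rho> = A ** (mpow A N ** \<rho> ** mpow B N) ** B"
    by (simp add: Suc.IH)
  also have "\<dots> = mpow A (Suc N) ** \<rho> ** mpow B (Suc N)"
    by (simp only: mpow.simps(2)[of A] mpow_Suc_right[of B] matrix_mul_assoc)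
  finally show ?case .
qed simp

lemma unitary_evol_funpow:
  "hermitian H \<Longrightarrow> (unitary_evol H \<tau> ^^ N) \<rho> = unitary_evol H (real N * \<tau>) \<rho>"
  by (simp add: unitary_evol_eq_sandwich sandwich_funpow mpow_propagator)

lemma trace_norm_tensor_id_unitary_evol:
  assumes "hermitian H"
  shows "trace_norm (tensor_id (unitary_evol H \<tau>) X) \<le> trace_norm X"
proof -
  have "trace_norm (tensor_id (unitary_evol H \<tau>) X)
      \<le> op_norm (propagator H \<tau>) * op_norm (propagator H (- \<tau>)) * trace_norm X"
    unfolding unitary_evol_eq_sandwich by (rule trace_norm_tensor_id_sandwich_le)
  also have "\<dots> \<le> 1 * 1 * trace_norm X"
    using op_norm_propagator_le_1[OF assms]
    by (intro mult_right_mono mult_mono op_norm_nonneg trace_norm_nonneg) auto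
  finally show ?thesis
    by simp
qed

lemma trace_norm_tensor_id_convex_combination:
  assumes "\<And>s. s \<in> S \<Longrightarrow> p s \<ge> 0"
    and "\<And>s. s \<in> S \<Longrightarrow> trace_norm (tensor_id (\<Phi> s) X) \<le> c * trace_norm X"
  shows "trace_norm (tensor_id (\<lambda>\<rho>. \<Sum>s\<in>S. p s *\<^sub>R \<Phi> s \<rho>) X) \<le> (\<Sum>s\<in>S. p s) * c * trace_norm X"
proof -
  have "trace_norm (tensor_id (\<lambda>\<rho>. \<Sum>s\<in>S. p s *\<^sub>R \<Phi> s \<rho>) X)
      \<le> (\<Sum>s\<in>S. trace_norm (p s *\<^sub>R tensor_id (\<Phi> s) X))"
    unfolding tensor_id_sum tensor_id_scaleR by (rule trace_norm_sum)
  also have "\<dots> \<le> (\<Sum>s\<in>S. p s * (c * trace_norm X))"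
    using assms
    by (intro sum_mono order_trans[OF trace_norm_scaleR]) (simp add: mult_left_mono)
  finally show ?thesis
    by (simp add: sum_distrib_right mult.assoc)
qed

definition evol_remainder :: "complex^'n^'n \<Rightarrow> real \<Rightarrow> complex^'n^'n \<Rightarrow> complex^'n^'n" where
  "evol_remainder H \<tau> \<rho> = unitary_evol H \<tau> \<rho> - \<rho> + cscale (\<i> * of_real \<tau>) (H ** \<rho> - \<rho> ** H)"

lemma evol_remainder_decomposition:
  "evol_remainder H \<tau> \<rho>
     = (propagator H \<tau> - mat 1 + cscale (\<i> * of_real \<tau>) H) ** \<rho> ** mat 1
     + mat 1 ** \<rho> ** (propagator H (- \<tau>) - mat 1 + cscale (\<i> * of_real (- \<tau>)) H)
     + (propagator H \<tau> - mat 1) ** \<rho> ** (propagator H (- \<tau>) - mat 1)"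
proof -
  have "cscale (\<i> * of_real (- \<tau>)) H = - cscale (\<i> * of_real \<tau>) H"
    by (simp add: vec_eq_iff)
  then show ?thesis
    by (simp add: evol_remainder_def unitary_evol_eq_sandwich matrix_add_rdistrib
        matrix_diff_rdistrib matrix_diff_ldistrib matrix_add_ldistrib cscale_matrix_mult
        matrix_mult_cscale cscale_diff matrix_mul_assoc vec_eq_iff algebra_simps)
qed

lemma trace_norm_tensor_id_evol_remainder:
  assumes "hermitian H" "op_norm H \<le> 1"
  shows "trace_norm (tensor_id (evol_remainder H \<tau>) X) \<le> 2 * \<tau>\<^sup>2 * trace_norm X"
proof -
  let ?sandwich = "\<lambda>A B. trace_norm (tensor_id (\<lambda>\<rho>. A ** \<rho> ** B) X)"
  have "trace_norm (tensor_id (evol_remainder H \<tau>) X)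
      \<le> ?sandwich (propagator H \<tau> - mat 1 + cscale (\<i> * of_real \<tau>) H) (mat 1)
       + ?sandwich (mat 1) (propagator H (- \<tau>) - mat 1 + cscale (\<i> * of_real (- \<tau>)) H)
       + ?sandwich (propagator H \<tau> - mat 1) (propagator H (- \<tau>) - mat 1)"
    unfolding evol_remainder_decomposition tensor_id_add
    by (meson add_mono order_trans order_refl trace_norm_triangle)
  also have "\<dots> \<le> (\<tau>\<^sup>2 / 2) * 1 * trace_norm X + 1 * (\<tau>\<^sup>2 / 2) * trace_norm X
      + \<bar>\<tau>\<bar> * \<bar>\<tau>\<bar> * trace_norm X"
    using op_norm_propagator_taylor_2[OF assms, of \<tau>] op_norm_propagator_taylor_2[OF assms, of "- \<tau>"]
      op_norm_propagator_diff_1[OF assms, of \<tau>] op_norm_propagator_diff_1[OF assms, of "- \<tau>"]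
    by (intro add_mono order_trans[OF trace_norm_tensor_id_sandwich_le] mult_right_mono mult_mono
        op_norm_mat_1 op_norm_nonneg trace_norm_nonneg) simp_all
  also have "\<dots> = 2 * \<tau>\<^sup>2 * trace_norm X"
    by (simp add: power2_eq_square algebra_simps)
  finally show ?thesis .
qed

(* The first-order terms of the exact step and of the averaged random step agree, so the step
   error is a difference of second-order remainders. *)
lemma trace_norm_tensor_id_qdrift_step:
  assumes p: "\<And>s. s \<in> S \<Longrightarrow> p s \<ge> 0" "(\<Sum>s\<in>S. p s) = 1"
    and H: "\<And>s. s \<in> S \<Longrightarrow> hermitian (Hs s)" "\<And>s. s \<in> S \<Longrightarrow> op_norm (Hs s) \<le> 1"
  shows "trace_norm (tensor_id (\<lambda>\<rho>. unitary_evol (\<Sum>s\<in>S. p s *\<^sub>R Hs s) \<tau> \<rho>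
      - (\<Sum>s\<in>S. p s *\<^sub>R unitary_evol (Hs s) \<tau> \<rho>)) X) \<le> 4 * \<tau>\<^sup>2 * trace_norm X"
proof -
  define G where "G = (\<Sum>s\<in>S. p s *\<^sub>R Hs s)"
  have hermG: "hermitian G"
    unfolding G_def using H(1) by (rule hermitian_sum_scaleR)
  have normG: "op_norm G \<le> 1"
    unfolding G_def using p H(2) by (rule op_norm_convex_combination_le_1)
  have "cscale (\<i> * of_real \<tau>) (G ** \<rho> - \<rho> ** G)
      = (\<Sum>s\<in>S. p s *\<^sub>R cscale (\<i> * of_real \<tau>) (Hs s ** \<rho> - \<rho> ** Hs s))" for \<rho>
    by (simp add: G_def sum_matrix_mult matrix_mult_sum matrix_scalar_ac cscale_sum cscale_diff
        cscale_scaleR sum_subtractf scaleR_right_diff_distrib flip: scalar_matrix_assoc)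
  then have "unitary_evol G \<tau> \<rho> - (\<Sum>s\<in>S. p s *\<^sub>R unitary_evol (Hs s) \<tau> \<rho>)
      = evol_remainder G \<tau> \<rho> - (\<Sum>s\<in>S. p s *\<^sub>R evol_remainder (Hs s) \<tau> \<rho>)" for \<rho>
    using p(2)
    by (simp add: evol_remainder_def scaleR_right_distrib scaleR_right_diff_distrib sum.distrib
        sum_subtractf flip: scaleR_sum_left)
  then have "trace_norm (tensor_id (\<lambda>\<rho>. unitary_evol G \<tau> \<rho>
      - (\<Sum>s\<in>S. p s *\<^sub>R unitary_evol (Hs s) \<tau> \<rho>)) X)
      \<le> trace_norm (tensor_id (evol_remainder G \<tau>) X)
       + trace_norm (tensor_id (\<lambda>\<rho>. \<Sum>s\<in>S. p s *\<^sub>R evol_remainder (Hs s) \<tau> \<rho>) X)"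
    by (simp add: tensor_id_diff trace_norm_diff)
  also have "\<dots> \<le> 2 * \<tau>\<^sup>2 * trace_norm X + (\<Sum>s\<in>S. p s) * (2 * \<tau>\<^sup>2) * trace_norm X"
    using p(1) trace_norm_tensor_id_evol_remainder[OF H]
    by (intro add_mono trace_norm_tensor_id_evol_remainder[OF hermG normG]
        trace_norm_tensor_id_convex_combination) (auto simp: mult.assoc)
  also have "\<dots> = 4 * \<tau>\<^sup>2 * trace_norm X"
    by (simp add: p(2))
  finally show ?thesis
    unfolding G_def .
qed

lemma funpow_diff_le:
  fixes F E :: "'a::ab_group_add \<Rightarrow> 'a" and \<nu> :: "'a \<Rightarrow> real"
  assumes \<nu>0: "\<nu> 0 = 0" and triangle: "\<And>x y. \<nu> (x + y) \<le> \<nu> x + \<nu> y"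
    and F: "\<And>x. \<nu> (F x) \<le> \<nu> x" and E: "\<And>x. \<nu> (E x) \<le> \<nu> x"
    and E_diff: "\<And>x y. E (x - y) = E x - E y"
    and step: "\<And>x. \<nu> (F x - E x) \<le> \<delta> * \<nu> x" and \<delta>: "\<delta> \<ge> 0"
  shows "\<nu> ((F ^^ k) x - (E ^^ k) x) \<le> real k * \<delta> * \<nu> x"
proof (induction k)
  case (Suc k)
  define a where "a = (F ^^ k) x"
  define b where "b = (E ^^ k) x"
  have "\<nu> a \<le> \<nu> x"
    unfolding a_def by (induction k) (auto intro: order_trans[OF F])
  have "\<nu> ((F ^^ Suc k) x - (E ^^ Suc k) x) = \<nu> ((F a - E a) + E (a - b))"
    by (simp add: a_def b_def E_diff)
  also have "\<dots> \<le> \<delta> * \<nu> a + \<nu> (a - b)"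
    using triangle step E order_trans add_mono by meson
  also have "\<dots> \<le> \<delta> * \<nu> x + real k * \<delta> * \<nu> x"
    using Suc.IH \<open>\<nu> a \<le> \<nu> x\<close> \<delta> by (simp add: a_def b_def mult_left_mono add_mono)
  finally show ?case
    by (simp add: algebra_simps)
qed (simp add: \<nu>0)

lemma trace_norm_tensor_id_qdrift_funpow:
  assumes p: "\<And>s. s \<in> S \<Longrightarrow> p s \<ge> 0" "(\<Sum>s\<in>S. p s) = 1"
    and H: "\<And>s. s \<in> S \<Longrightarrow> hermitian (Hs s)" "\<And>s. s \<in> S \<Longrightarrow> op_norm (Hs s) \<le> 1"
  shows "trace_norm ((tensor_id (unitary_evol (\<Sum>s\<in>S. p s *\<^sub>R Hs s) \<tau>) ^^ N) X
      - (tensor_id (\<lambda>\<rho>. \<Sum>s\<in>S. p s *\<^sub>R unitary_evol (Hs s) \<tau> \<rho>) ^^ N) X)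
    \<le> real N * (4 * \<tau>\<^sup>2) * trace_norm X"
proof (rule funpow_diff_le)
  show "trace_norm (tensor_id (unitary_evol (\<Sum>s\<in>S. p s *\<^sub>R Hs s) \<tau>) X) \<le> trace_norm X" for X
    using hermitian_sum_scaleR[OF H(1)] by (rule trace_norm_tensor_id_unitary_evol)
  show "trace_norm (tensor_id (\<lambda>\<rho>. \<Sum>s\<in>S. p s *\<^sub>R unitary_evol (Hs s) \<tau> \<rho>) X) \<le> trace_norm X"
    for X
    using trace_norm_tensor_id_convex_combination[of S p "\<lambda>s. unitary_evol (Hs s) \<tau>" X 1]
      p trace_norm_tensor_id_unitary_evol[OF H(1)] by simp
  show "tensor_id (\<lambda>\<rho>. \<Sum>s\<in>S. p s *\<^sub>R unitary_evol (Hs s) \<tau> \<rho>) (X - Y)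
      = tensor_id (\<lambda>\<rho>. \<Sum>s\<in>S. p s *\<^sub>R unitary_evol (Hs s) \<tau> \<rho>) X
      - tensor_id (\<lambda>\<rho>. \<Sum>s\<in>S. p s *\<^sub>R unitary_evol (Hs s) \<tau> \<rho>) Y" for X Y
    by (rule tensor_id_diff_right)
      (simp add: unitary_evol_eq_sandwich matrix_diff_rdistrib matrix_diff_ldistrib
        scaleR_right_diff_distrib sum_subtractf)
  show "trace_norm (tensor_id (unitary_evol (\<Sum>s\<in>S. p s *\<^sub>R Hs s) \<tau>) X
      - tensor_id (\<lambda>\<rho>. \<Sum>s\<in>S. p s *\<^sub>R unitary_evol (Hs s) \<tau> \<rho>) X) \<le> 4 * \<tau>\<^sup>2 * trace_norm X" for X
    using trace_norm_tensor_id_qdrift_step[OF p H, where \<tau> = \<tau> and X = X]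
    by (simp add: tensor_id_diff)
qed (simp_all add: trace_norm_triangle)

lemma diamond_norm_le:
  fixes \<Phi> :: "complex^'n^'n \<Rightarrow> complex^'n^'n"
  assumes "c \<ge> 0" and "\<And>X. trace_norm (tensor_id \<Phi> X) \<le> c * trace_norm X"
  shows "diamond_norm \<Phi> \<le> c"
  unfolding diamond_norm_def
proof (rule cSup_least)
  have "trace_norm (0 :: complex^('n \<times> 'n)^('n \<times> 'n)) \<le> 1"
    by simp
  then show "{trace_norm (tensor_id \<Phi> X) |X. trace_norm X \<le> 1} \<noteq> {}"
    by blast
  fix x assume "x \<in> {trace_norm (tensor_id \<Phi> X) |X. trace_norm X \<le> 1}"
  then obtain X where "trace_norm X \<le> 1" "x = trace_norm (tensor_id \<Phi> X)"
    by blast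
  then show "x \<le> c"
    using assms(2)[of X] mult_left_mono[of "trace_norm X" 1 c] assms(1) by simp
qed

lemma qdrift_diamond_norm_le:
  fixes h :: "nat \<Rightarrow> real" and Hs :: "nat \<Rightarrow> complex^'d^'d"
  assumes h_nonneg: "\<And>s. s \<in> {1..n} \<Longrightarrow> h s \<ge> 0"
    and Gamma_pos: "(\<Sum>s=1..n. h s) > 0"
    and herm: "\<And>s. s \<in> {1..n} \<Longrightarrow> hermitian (Hs s)"
    and norm_le: "\<And>s. s \<in> {1..n} \<Longrightarrow> op_norm (Hs s) \<le> 1"
    and r_pos: "r > 0"
    and N_def: "real N = real r * (\<Sum>s=1..n. h s)"
  shows "diamond_norm (\<lambda>\<rho>. unitary_evol (\<Sum>s=1..n. h s *\<^sub>R Hs s) t \<rho>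
      - (qdrift n h Hs (t / real r) ^^ N) \<rho>) \<le> 4 * t\<^sup>2 * (\<Sum>s=1..n. h s) / real r"
proof -
  define \<Gamma> where "\<Gamma> = (\<Sum>s=1..n. h s)"
  define p where "p s = h s / \<Gamma>" for s
  define \<tau> where "\<tau> = t / real r"
  define G where "G = (\<Sum>s=1..n. p s *\<^sub>R Hs s)"
  have p: "\<And>s. s \<in> {1..n} \<Longrightarrow> p s \<ge> 0" "(\<Sum>s=1..n. p s) = 1"
    using h_nonneg Gamma_pos by (simp_all add: p_def \<Gamma>_def flip: sum_divide_distrib)
  have hermG: "hermitian G"
    unfolding G_def using herm by (rule hermitian_sum_scaleR)
  have "(\<Sum>s=1..n. h s *\<^sub>R Hs s) = \<Gamma> *\<^sub>R G"
    using Gamma_pos by (simp add: G_def p_def \<Gamma>_def scaleR_sum_right)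
  then have exact: "unitary_evol (\<Sum>s=1..n. h s *\<^sub>R Hs s) t = unitary_evol G \<tau> ^^ N"
    using r_pos N_def
    by (simp add: fun_eq_iff unitary_evol_scaleR unitary_evol_funpow[OF hermG] \<tau>_def \<Gamma>_def)
  have qdrift: "qdrift n h Hs \<tau> = (\<lambda>\<rho>. \<Sum>s=1..n. p s *\<^sub>R unitary_evol (Hs s) \<tau> \<rho>)"
    by (simp add: fun_eq_iff qdrift_def p_def \<Gamma>_def)
  have "diamond_norm (\<lambda>\<rho>. unitary_evol (\<Sum>s=1..n. h s *\<^sub>R Hs s) t \<rho> - (qdrift n h Hs \<tau> ^^ N) \<rho>)
      \<le> real N * (4 * \<tau>\<^sup>2)"
    unfolding exact qdrift G_def
    using trace_norm_tensor_id_qdrift_funpow[OF p herm norm_le]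
    by (intro diamond_norm_le) (simp_all add: tensor_id_diff tensor_id_funpow)
  moreover have "real N * (4 * \<tau>\<^sup>2) = 4 * t\<^sup>2 * \<Gamma> / real r"
    using r_pos N_def by (simp add: \<tau>_def \<Gamma>_def power2_eq_square field_simps)
  ultimately show ?thesis
    by (simp add: \<tau>_def \<Gamma>_def)
qed

theorem corollary1:
  fixes n :: nat and h :: "nat \<Rightarrow> real" and Hs :: "nat \<Rightarrow> complex^'d^'d"
    and t :: real and r :: nat and N :: nat
  assumes h_nonneg: "\<And>s. s \<in> {1..n} \<Longrightarrow> h s \<ge> 0"
    and Gamma_pos: "(\<Sum>s=1..n. h s) > 0"
    and herm: "\<And>s. s \<in> {1..n} \<Longrightarrow> hermitian (Hs s)"
    and norm_le: "\<And>s. s \<in> {1..n} \<Longrightarrow> op_norm (Hs s) \<le> 1"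
    and t_nonneg: "t \<ge> 0"
    and r_pos: "r > 0"
    and N_pos: "N > 0"
    and N_def: "real N = real r * (\<Sum>s=1..n. h s)"
  shows "diamond_norm (\<lambda>\<rho>. unitary_evol (\<Sum>s=1..n. h s *\<^sub>R Hs s) t \<rho>
                           - (qdrift n h Hs (t / real r) ^^ N) \<rho>)
           \<le> 4 * t\<^sup>2 * (\<Sum>s=1..n. h s) / real r
       \<and> (\<forall>\<epsilon>>0. real r \<ge> real_of_int \<lceil>4 * t\<^sup>2 * (\<Sum>s=1..n. h s) / \<epsilon>\<rceil> \<longrightarrow>
             diamond_norm (\<lambda>\<rho>. unitary_evol (\<Sum>s=1..n. h s *\<^sub>R Hs s) t \<rho>
                           - (qdrift n h Hs (t / real r) ^^ N) \<rho>) \<le> \<epsilon>)"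
proof -
  let ?c = "4 * t\<^sup>2 * (\<Sum>s=1..n. h s)"
  have bound: "diamond_norm (\<lambda>\<rho>. unitary_evol (\<Sum>s=1..n. h s *\<^sub>R Hs s) t \<rho>
      - (qdrift n h Hs (t / real r) ^^ N) \<rho>) \<le> ?c / real r"
    by (rule qdrift_diamond_norm_le[OF h_nonneg Gamma_pos herm norm_le r_pos N_def])
  have "?c / real r \<le> \<epsilon>" if "\<epsilon> > 0" "real r \<ge> real_of_int \<lceil>?c / \<epsilon>\<rceil>" for \<epsilon>
  proof -
    have "?c / \<epsilon> \<le> real r"
      using le_of_int_ceiling[of "?c / \<epsilon>"] that(2) by linarith
    then show ?thesis
      using that(1) r_pos by (simp add: field_simps)
  qed
  with bound show ?thesis
    by (meson order_trans)
qed

end
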